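(* Let $L\ge2$ and $0\le p<1$, and let $(\eta_n)_{n\ge0}$ be the Markov chain on $\{0,1\}^L$ with transition function $Q$, started from the stationary distribution $\pi(\omega)=Z^{-1}\prod_{j=0}^{|\omega|-1}c_j/c_{L-j-1}$. Then $$\mathbb E_\pi[\eta_0(0)\eta_1(0)]-\frac14=\frac{2p-1}{4\big(2L(1-p)+2p-1\big)}.$$
   Context: $\Omega=\{0,1\}^L$, $\omega=(\omega(0),\dots,\omega(L-1))$, $|\omega|=\sum_j\omega(j)$. The transition function $Q$ is $Q\big(\eta,(\eta(1),\dots,\eta(L-1),s)\big)=\frac1L\big(|\eta|p+(L-|\eta|)(1-p)\big)$ for $s=1$, $=\frac1L\big((L-|\eta|)p+|\eta|(1-p)\big)$ for $s=0$, and $Q(\eta,\omega)=0$ otherwise. $c_j=(1-p)(1-\frac jL)+\frac jLp$ and $Z$ is a normalizing constant; this $\pi$ is stationary for $Q$. *)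

theory Defs
  imports Complex_Main "HOL-Library.FuncSet"
begin

definition Omega :: "nat \<Rightarrow> (nat \<Rightarrow> nat) set" where
  "Omega L = PiE {0..<L} (\<lambda>_. {0, 1})"

definition weight :: "nat \<Rightarrow> (nat \<Rightarrow> nat) \<Rightarrow> nat" where
  "weight L \<omega> = (\<Sum>j<L. \<omega> j)"

definition shift :: "nat \<Rightarrow> (nat \<Rightarrow> nat) \<Rightarrow> nat \<Rightarrow> (nat \<Rightarrow> nat)" where
  "shift L \<eta> s = (\<lambda>j. if j < L - 1 then \<eta> (j + 1) else if j = L - 1 then s else undefined)"

definition Qtr :: "nat \<Rightarrow> real \<Rightarrow> (nat \<Rightarrow> nat) \<Rightarrow> (nat \<Rightarrow> nat) \<Rightarrow> real" where
  "Qtr L p \<eta> \<omega> =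
     (if \<omega> = shift L \<eta> 1 then
        (real (weight L \<eta>) * p + (real L - real (weight L \<eta>)) * (1 - p)) / real L
      else if \<omega> = shift L \<eta> 0 then
        ((real L - real (weight L \<eta>)) * p + real (weight L \<eta>) * (1 - p)) / real L
      else 0)"

definition cc :: "nat \<Rightarrow> real \<Rightarrow> nat \<Rightarrow> real" where
  "cc L p j = (1 - p) * (1 - real j / real L) + real j / real L * p"

definition unnorm :: "nat \<Rightarrow> real \<Rightarrow> (nat \<Rightarrow> nat) \<Rightarrow> real" where
  "unnorm L p \<omega> = (\<Prod>j<weight L \<omega>. cc L p j / cc L p (L - j - 1))"

definition Zc :: "nat \<Rightarrow> real \<Rightarrow> real" where
  "Zc L p = (\<Sum>\<omega>\<in>Omega L. unnorm L p \<omega>)"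

definition statdist :: "nat \<Rightarrow> real \<Rightarrow> (nat \<Rightarrow> nat) \<Rightarrow> real" where
  "statdist L p \<omega> = unnorm L p \<omega> / Zc L p"

end

theory Submission
  imports Defs
begin

text \<open>Since the chain only shifts the configuration, \<open>\<eta>\<^sub>1(0) = \<eta>\<^sub>0(1)\<close>, so the quantity is
  the stationary correlation of the first two sites. The stationary law depends only on the weight
  \<open>k = |\<omega>|\<close>, hence it is exchangeable, and the correlation equals \<open>E[k(k-1)]/(L(L-1))\<close>. The law
  \<open>a\<^sub>k\<close> of the weight satisfies detailed balance for the birth-death chain followed by \<open>|\<eta>\<^sub>n|\<close>;
  summing the balance equation against \<open>1\<close> and against \<open>k\<close> yields two linear relations
  which pin down \<open>E[k] = L/2\<close> and \<open>E[k\<^sup>2]\<close>.\<close>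

lemma finite_Omega: "finite (Omega L)"
  by (simp add: Omega_def finite_PiE)

definition cons_config :: "nat \<Rightarrow> nat \<Rightarrow> (nat \<Rightarrow> nat) \<Rightarrow> (nat \<Rightarrow> nat)" where
  "cons_config L b \<omega> = (\<lambda>j. if j = 0 then b else if j \<le> L then \<omega> (j - 1) else undefined)"

definition tail_config :: "nat \<Rightarrow> (nat \<Rightarrow> nat) \<Rightarrow> (nat \<Rightarrow> nat)" where
  "tail_config L \<omega> = (\<lambda>j. if j < L then \<omega> (j + 1) else undefined)"

lemma cons_config_0 [simp]: "cons_config L b \<omega> 0 = b"
  by (simp add: cons_config_def)

lemma cons_config_Suc [simp]: "j < L \<Longrightarrow> cons_config L b \<omega> (Suc j) = \<omega> j"
  by (simp add: cons_config_def)

lemma cons_config_in_Omega: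
  assumes "b \<in> {0, 1}" and "\<omega> \<in> Omega L"
  shows "cons_config L b \<omega> \<in> Omega (Suc L)"
  unfolding Omega_def PiE_iff
proof (intro conjI ballI)
  fix i assume "i \<in> {0..<Suc L}"
  then show "cons_config L b \<omega> i \<in> {0, 1}"
    using assms by (cases i) (auto simp: Omega_def PiE_iff)
qed (auto simp: cons_config_def extensional_def)

lemma tail_config_in_Omega:
  assumes "\<omega> \<in> Omega (Suc L)"
  shows "tail_config L \<omega> \<in> Omega L"
  using assms by (auto simp: Omega_def PiE_iff tail_config_def extensional_def)

lemma bij_betw_cons_config:
  "bij_betw (\<lambda>(b, \<omega>). cons_config L b \<omega>) ({0, 1} \<times> Omega L) (Omega (Suc L))"
proof (rule bij_betw_byWitness[where f' = "\<lambda>\<omega>. (\<omega> 0, tail_config L \<omega>)"])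
  show "\<forall>x\<in>{0, 1} \<times> Omega L. (\<lambda>\<omega>. (\<omega> 0, tail_config L \<omega>)) ((\<lambda>(b, \<omega>). cons_config L b \<omega>) x) = x"
    by (auto simp: cons_config_def tail_config_def Omega_def PiE_iff extensional_def fun_eq_iff)
  show "\<forall>\<omega>\<in>Omega (Suc L). (\<lambda>(b, \<omega>). cons_config L b \<omega>) (\<omega> 0, tail_config L \<omega>) = \<omega>"
    by (auto simp: cons_config_def tail_config_def Omega_def PiE_iff extensional_def fun_eq_iff)
  show "(\<lambda>(b, \<omega>). cons_config L b \<omega>) ` ({0, 1} \<times> Omega L) \<subseteq> Omega (Suc L)"
    using cons_config_in_Omega by auto
  show "(\<lambda>\<omega>. (\<omega> 0, tail_config L \<omega>)) ` Omega (Suc L) \<subseteq> {0, 1} \<times> Omega L"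
  proof (rule image_subsetI)
    fix \<omega> assume "\<omega> \<in> Omega (Suc L)"
    moreover from this have "\<omega> 0 \<in> {0, 1}"
      by (auto simp: Omega_def PiE_iff)
    ultimately show "(\<omega> 0, tail_config L \<omega>) \<in> {0, 1} \<times> Omega L"
      using tail_config_in_Omega by blast
  qed
qed

lemma sum_Omega_Suc:
  "(\<Sum>\<omega>\<in>Omega (Suc L). g \<omega>) =
     (\<Sum>\<omega>\<in>Omega L. g (cons_config L 0 \<omega>)) + (\<Sum>\<omega>\<in>Omega L. g (cons_config L 1 \<omega>))"
proof -
  have "(\<Sum>\<omega>\<in>Omega (Suc L). g \<omega>) = (\<Sum>(b, \<omega>)\<in>{0, 1} \<times> Omega L. g (cons_config L b \<omega>))"
    using sum.reindex_bij_betw[OF bij_betw_cons_config, of g] by (simp add: case_prod_beta)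
  also have "\<dots> = (\<Sum>b\<in>{0::nat, 1}. \<Sum>\<omega>\<in>Omega L. g (cons_config L b \<omega>))"
    by (rule sum.cartesian_product[symmetric])
  finally show ?thesis by simp
qed

lemma weight_cons_config:
  "\<omega> \<in> Omega L \<Longrightarrow> weight (Suc L) (cons_config L b \<omega>) = b + weight L \<omega>"
  unfolding weight_def by (subst sum.lessThan_Suc_shift) simp

lemma sum_Omega_weight:
  "(\<Sum>\<omega>\<in>Omega L. F (weight L \<omega>)) = (\<Sum>k\<le>L. real (L choose k) * F k)"
proof (induction L arbitrary: F)
  case 0
  then show ?case by (simp add: Omega_def weight_def)
next
  case (Suc L)
  have "(\<Sum>\<omega>\<in>Omega (Suc L). F (weight (Suc L) \<omega>)) =
      (\<Sum>\<omega>\<in>Omega L. F (weight L \<omega>)) + (\<Sum>\<omega>\<in>Omega L. F (Suc (weight L \<omega>)))"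
    by (simp add: sum_Omega_Suc weight_cons_config)
  also have "\<dots> = (\<Sum>k\<le>L. real (L choose k) * F k) + (\<Sum>k\<le>L. real (L choose k) * F (Suc k))"
    using Suc.IH[of F] Suc.IH[of "\<lambda>k. F (Suc k)"] by simp
  also have "\<dots> = (\<Sum>k\<le>Suc L. real (Suc L choose k) * F k)"
  proof -
    have "(\<Sum>k\<le>L. real (L choose k) * F k) = (\<Sum>k\<le>Suc L. real (L choose k) * F k)"
      by simp
    also have "\<dots> = F 0 + (\<Sum>k\<le>L. real (L choose Suc k) * F (Suc k))"
      by (subst sum.atMost_Suc_shift) simp
    finally have "(\<Sum>k\<le>L. real (L choose k) * F k)
        = F 0 + (\<Sum>k\<le>L. real (L choose Suc k) * F (Suc k))" .
    moreover have "(\<Sum>k\<le>Suc L. real (Suc L choose k) * F k)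
        = F 0 + (\<Sum>k\<le>L. real (Suc L choose Suc k) * F (Suc k))"
      by (subst sum.atMost_Suc_shift) simp
    ultimately show ?thesis by (simp add: algebra_simps sum.distrib)
  qed
  finally show ?case .
qed

lemma sum_Omega_weight_first_two:
  assumes "L \<ge> 2"
  shows "real L * (real L - 1) * (\<Sum>\<omega>\<in>Omega L. F (weight L \<omega>) * real (\<omega> 0) * real (\<omega> 1))
           = (\<Sum>k\<le>L. real (L choose k) * F k * (real k * (real k - 1)))"
proof -
  obtain M where L: "L = Suc (Suc M)"
    using assms by (metis add_2_eq_Suc le_Suc_ex)
  have binomial: "real L * (real L - 1) * real (M choose k)
      = real (L choose Suc (Suc k)) * (real (Suc (Suc k)) * (real (Suc (Suc k)) - 1))" for k
  proof -
    have "Suc (Suc k) * Suc k * (L choose Suc (Suc k)) = L * Suc M * (M choose k)"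
      unfolding L by (metis Suc_times_binomial mult.assoc mult.commute)
    from arg_cong[OF this, of real]
    have "real (Suc (Suc k)) * real (Suc k) * real (L choose Suc (Suc k))
        = real L * (real L - 1) * real (M choose k)"
      unfolding L by (simp only: of_nat_mult) simp
    then show ?thesis by (simp add: algebra_simps)
  qed
  have "(\<Sum>\<omega>\<in>Omega L. F (weight L \<omega>) * real (\<omega> 0) * real (\<omega> 1))
      = (\<Sum>\<omega>\<in>Omega M. F (Suc (Suc (weight M \<omega>))))"
    unfolding L by (simp add: sum_Omega_Suc weight_cons_config cong: sum.cong)
  also have "\<dots> = (\<Sum>k\<le>M. real (M choose k) * F (Suc (Suc k)))"
    by (rule sum_Omega_weight)
  finally have "real L * (real L - 1) * (\<Sum>\<omega>\<in>Omega L. F (weight L \<omega>) * real (\<omega> 0) * real (\<omega> 1))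
      = (\<Sum>k\<le>M. real L * (real L - 1) * real (M choose k) * F (Suc (Suc k)))"
    by (simp add: sum_distrib_left mult.assoc)
  also have "\<dots> = (\<Sum>k\<le>M. real (L choose Suc (Suc k)) * F (Suc (Suc k))
                                * (real (Suc (Suc k)) * (real (Suc (Suc k)) - 1)))"
    by (rule sum.cong[OF refl], simp only: binomial, simp add: mult_ac)
  also have "\<dots> = (\<Sum>k\<le>L. real (L choose k) * F k * (real k * (real k - 1)))"
    unfolding L by (simp add: sum.atMost_Suc_shift del: sum.atMost_Suc)
  finally show ?thesis .
qed

section \<open>One step of the chain\<close>

lemma shift_in_Omega:
  assumes "\<eta> \<in> Omega L" and "s \<in> {0, 1}" and "L \<ge> 1"
  shows "shift L \<eta> s \<in> Omega L"
  unfolding Omega_def PiE_iff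
proof (intro conjI ballI)
  fix i assume "i \<in> {0..<L}"
  then show "shift L \<eta> s i \<in> {0, 1}"
    using assms by (cases "i < L - 1") (auto simp: shift_def Omega_def PiE_iff)
qed (use assms(3) in \<open>auto simp: shift_def extensional_def\<close>)

lemma sum_Qtr_first_site:
  assumes "\<eta> \<in> Omega L" and "L \<ge> 2"
  shows "(\<Sum>\<omega>\<in>Omega L. Qtr L p \<eta> \<omega> * real (\<omega> 0)) = real (\<eta> 1)"
proof -
  define s1 where "s1 = shift L \<eta> 1"
  define s0 where "s0 = shift L \<eta> 0"
  define w where "w = real (weight L \<eta>)"
  define A where "A = (w * p + (real L - w) * (1 - p)) / real L"
  define B where "B = ((real L - w) * p + w * (1 - p)) / real L"
  have "s1 (L - 1) \<noteq> s0 (L - 1)"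
    by (simp add: s1_def s0_def shift_def)
  then have "s1 \<noteq> s0" by auto
  then have Q: "Qtr L p \<eta> \<omega> * real (\<omega> 0) =
      (if \<omega> = s1 then A * real (s1 0) else 0) + (if \<omega> = s0 then B * real (s0 0) else 0)" for \<omega>
    unfolding Qtr_def s1_def[symmetric] s0_def[symmetric] A_def B_def w_def by auto
  have "s1 \<in> Omega L" "s0 \<in> Omega L"
    using shift_in_Omega[OF assms(1)] assms(2) by (auto simp: s1_def s0_def)
  then have "(\<Sum>\<omega>\<in>Omega L. Qtr L p \<eta> \<omega> * real (\<omega> 0)) = A * real (s1 0) + B * real (s0 0)"
    unfolding Q using finite_Omega[of L] by (simp add: sum.distrib)
  also have "\<dots> = (A + B) * real (\<eta> 1)"
    using assms(2) by (simp add: s1_def s0_def shift_def algebra_simps)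
  also have "A + B = 1"
    using assms(2) unfolding A_def B_def by (simp add: field_simps)
  finally show ?thesis by simp
qed

lemma two_step_correlation_eq_first_two_sites:
  assumes "L \<ge> 2"
  shows "(\<Sum>\<eta>\<in>Omega L. \<Sum>\<omega>\<in>Omega L. \<mu> \<eta> * Qtr L p \<eta> \<omega> * real (\<eta> 0) * real (\<omega> 0))
           = (\<Sum>\<eta>\<in>Omega L. \<mu> \<eta> * real (\<eta> 0) * real (\<eta> 1))"
proof (rule sum.cong)
  fix \<eta> assume "\<eta> \<in> Omega L"
  have "(\<Sum>\<omega>\<in>Omega L. \<mu> \<eta> * Qtr L p \<eta> \<omega> * real (\<eta> 0) * real (\<omega> 0))
      = \<mu> \<eta> * real (\<eta> 0) * (\<Sum>\<omega>\<in>Omega L. Qtr L p \<eta> \<omega> * real (\<omega> 0))"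
    by (simp add: sum_distrib_left mult_ac)
  then show "(\<Sum>\<omega>\<in>Omega L. \<mu> \<eta> * Qtr L p \<eta> \<omega> * real (\<eta> 0) * real (\<omega> 0))
      = \<mu> \<eta> * real (\<eta> 0) * real (\<eta> 1)"
    using sum_Qtr_first_site[OF \<open>\<eta> \<in> Omega L\<close> assms] by simp
qed simp

section \<open>Detailed balance for the weight\<close>

text \<open>For an exchangeable configuration of weight \<open>k\<close>, the weight moves up when a \<open>0\<close> is dropped
  and a \<open>1\<close> appended, which has probability \<open>(L - k)((1-p)(L-k) + pk)/L\<^sup>2\<close>, and down with probability
  \<open>k((1-p)k + p(L-k))/L\<^sup>2\<close>; \<open>balanced L p a\<close> is detailed balance for these rates.\<close>

definition balanced :: "nat \<Rightarrow> real \<Rightarrow> (nat \<Rightarrow> real) \<Rightarrow> bool" where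
  "balanced L p a \<longleftrightarrow> (\<forall>k<L.
     a (Suc k) * real (Suc k) * ((1 - p) * real (Suc k) + p * (real L - real (Suc k)))
       = a k * (real L - real k) * ((1 - p) * (real L - real k) + p * real k))"

lemma balanced_sum_shift:
  assumes "balanced L p a"
  shows "(\<Sum>k\<le>L. a k * (real L - real k) * ((1 - p) * (real L - real k) + p * real k) * \<phi> (Suc k))
       = (\<Sum>k\<le>L. a k * real k * ((1 - p) * real k + p * (real L - real k)) * \<phi> k)"
    (is "(\<Sum>k\<le>L. ?up k) = (\<Sum>k\<le>L. ?down k)")
proof -
  have "(\<Sum>k\<le>L. ?up k) = (\<Sum>k<L. ?up k)"
    by (simp add: lessThan_Suc_atMost[symmetric])
  also have "\<dots> = (\<Sum>k<L. ?down (Suc k))"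
    using assms by (simp add: balanced_def)
  also have "\<dots> = (\<Sum>k<Suc L. ?down k)"
    by (subst sum.lessThan_Suc_shift) simp
  also have "\<dots> = (\<Sum>k\<le>L. ?down k)"
    by (simp only: lessThan_Suc_atMost)
  finally show ?thesis .
qed

lemma balanced_first_moment:
  assumes "balanced L p a" and "L > 0" and "p < 1"
  shows "2 * (\<Sum>k\<le>L. a k * real k) = real L * (\<Sum>k\<le>L. a k)"
proof -
  have "(\<Sum>k\<le>L. a k * (real L - real k) * ((1 - p) * (real L - real k) + p * real k)
              - a k * real k * ((1 - p) * real k + p * (real L - real k))) = 0"
    using balanced_sum_shift[OF assms(1), of "\<lambda>_. 1"] by (simp add: sum_subtractf)
  moreover have "a k * (real L - real k) * ((1 - p) * (real L - real k) + p * real k)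
              - a k * real k * ((1 - p) * real k + p * (real L - real k))
      = ((1 - p) * real L * real L) * a k - (2 * (1 - p) * real L) * (a k * real k)" for k
    by (simp add: algebra_simps)
  ultimately have "((1 - p) * real L * real L) * (\<Sum>k\<le>L. a k)
      - (2 * (1 - p) * real L) * (\<Sum>k\<le>L. a k * real k) = 0"
    by (simp only: sum_subtractf sum_distrib_left[symmetric])
  then have "(1 - p) * real L * (real L * (\<Sum>k\<le>L. a k) - 2 * (\<Sum>k\<le>L. a k * real k)) = 0"
    by (simp add: algebra_simps)
  then show ?thesis using assms(2,3) by simp
qed

lemma balanced_second_moment:
  assumes "balanced L p a"
  shows "((1 - p) * real L ^ 2 + p * real L) * (\<Sum>k\<le>L. a k * real k)
       = (2 * (1 - p) * real L + 2 * p - 1) * (\<Sum>k\<le>L. a k * real k ^ 2)"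
proof -
  have "(\<Sum>k\<le>L. a k * (real L - real k) * ((1 - p) * (real L - real k) + p * real k) * real k
              - a k * real k * ((1 - p) * real k + p * (real L - real k)) * (real k - 1)) = 0"
    using balanced_sum_shift[OF assms, of "\<lambda>k. real k - 1"] by (simp add: sum_subtractf)
  moreover have "a k * (real L - real k) * ((1 - p) * (real L - real k) + p * real k) * real k
              - a k * real k * ((1 - p) * real k + p * (real L - real k)) * (real k - 1)
      = ((1 - p) * real L ^ 2 + p * real L) * (a k * real k)
          - (2 * (1 - p) * real L + 2 * p - 1) * (a k * real k ^ 2)" for k
    by (simp add: algebra_simps power2_eq_square)
  ultimately show ?thesis
    by (simp only: sum_subtractf sum_distrib_left[symmetric])
qed

lemma balanced_factorial_moment:
  assumes "balanced L p a" and "L \<ge> 2" and "p < 1" and "(\<Sum>k\<le>L. a k) > 0"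
  shows "(\<Sum>k\<le>L. a k * (real k * (real k - 1))) / (real L * (real L - 1)) / (\<Sum>k\<le>L. a k) - 1/4
       = (2 * p - 1) / (4 * (2 * real L * (1 - p) + 2 * p - 1))"
proof -
  define S0 where "S0 = (\<Sum>k\<le>L. a k)"
  define S1 where "S1 = (\<Sum>k\<le>L. a k * real k)"
  define S2 where "S2 = (\<Sum>k\<le>L. a k * real k ^ 2)"
  define D where "D = 2 * real L * (1 - p) + 2 * p - 1"
  define Y where "Y = (1 - p) * real L + 2 * p - 1"
  have "real L \<ge> 2" using assms(2) by simp
  then have "D > 0" and "real L > 1"
    using assms(3) mult_right_mono[of 2 "real L" "1 - p"] unfolding D_def by auto
  have S1: "S1 = real L * S0 / 2"
    using balanced_first_moment[OF assms(1)] assms(2,3) by (simp add: S0_def S1_def)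
  have S2: "S2 = ((1 - p) * real L ^ 2 + p * real L) * S1 / D"
    using balanced_second_moment[OF assms(1)] \<open>D > 0\<close>
    by (simp add: S1_def S2_def D_def field_simps)
  have "(\<Sum>k\<le>L. a k * (real k * (real k - 1))) = S2 - S1"
    by (simp add: S1_def S2_def sum_subtractf algebra_simps power2_eq_square)
  also have "\<dots> = real L * S0 / 2 * (real L - 1) * Y / D"
    using \<open>D > 0\<close> unfolding S2 S1 by (simp add: D_def Y_def field_simps power2_eq_square)
  finally have "(\<Sum>k\<le>L. a k * (real k * (real k - 1))) / (real L * (real L - 1)) / S0 = Y / (2 * D)"
    using \<open>D > 0\<close> \<open>real L > 1\<close> assms(4) by (simp add: S0_def field_simps)
  moreover have "Y / (2 * D) - 1/4 = (2 * p - 1) / (4 * D)"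
    using \<open>D > 0\<close> by (simp add: Y_def D_def field_simps)
  ultimately show ?thesis
    unfolding S0_def D_def by simp
qed

section \<open>The stationary weights\<close>

definition stat_factor :: "nat \<Rightarrow> real \<Rightarrow> nat \<Rightarrow> real" where
  "stat_factor L p k = (\<Prod>j<k. cc L p j / cc L p (L - j - 1))"

lemma unnorm_eq_stat_factor: "unnorm L p \<omega> = stat_factor L p (weight L \<omega>)"
  by (simp add: unnorm_def stat_factor_def)

lemma cc_pos:
  assumes "j < L" and "0 \<le> p" and "p < 1"
  shows "cc L p j > 0"
proof -
  have "(1 - p) * (1 - real j / real L) > 0"
    using assms by simp
  moreover have "real j / real L * p \<ge> 0"
    using assms by simp
  ultimately show ?thesis unfolding cc_def by linarith
qed

lemma stat_factor_pos:
  assumes "k \<le> L" and "0 \<le> p" and "p < 1"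
  shows "stat_factor L p k > 0"
  unfolding stat_factor_def
  by (rule prod_pos) (use assms in \<open>auto intro!: divide_pos_pos cc_pos\<close>)

lemma Zc_eq_sum_weights: "Zc L p = (\<Sum>k\<le>L. real (L choose k) * stat_factor L p k)"
  unfolding Zc_def unnorm_eq_stat_factor by (rule sum_Omega_weight)

lemma Zc_pos:
  assumes "0 \<le> p" and "p < 1"
  shows "Zc L p > 0"
proof -
  have "(\<Sum>k\<in>{0}. real (L choose k) * stat_factor L p k) \<le> Zc L p"
    unfolding Zc_eq_sum_weights
    by (rule sum_mono2) (use assms in \<open>auto intro!: mult_nonneg_nonneg less_imp_le[OF stat_factor_pos]\<close>)
  moreover have "stat_factor L p 0 > 0"
    using assms by (intro stat_factor_pos) auto
  ultimately show ?thesis by simp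
qed

lemma balanced_stat_weights:
  assumes "L > 0" and "0 \<le> p" and "p < 1"
  shows "balanced L p (\<lambda>k. real (L choose k) * stat_factor L p k)"
  unfolding balanced_def
proof (intro allI impI)
  fix k assume "k < L"
  have up: "real L * cc L p k = (1 - p) * (real L - real k) + p * real k"
    using assms(1) unfolding cc_def by (simp add: field_simps)
  have down: "real L * cc L p (L - k - 1) = (1 - p) * real (Suc k) + p * (real L - real (Suc k))"
    using assms(1) \<open>k < L\<close> unfolding cc_def by (simp add: field_simps of_nat_diff)
  have "cc L p (L - k - 1) > 0"
    using cc_pos assms \<open>k < L\<close> by simp
  then have factor: "stat_factor L p (Suc k) * (real L * cc L p (L - k - 1))
      = stat_factor L p k * (real L * cc L p k)"
    by (simp add: stat_factor_def)
  have "Suc k * (L choose Suc k) = (L - k) * (L choose k)"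
    by (metis binomial_absorption binomial_absorb_comp)
  then have binomial: "real (Suc k) * real (L choose Suc k) = (real L - real k) * real (L choose k)"
    using \<open>k < L\<close> by (metis of_nat_diff of_nat_mult less_imp_le)
  show "real (L choose Suc k) * stat_factor L p (Suc k) * real (Suc k)
          * ((1 - p) * real (Suc k) + p * (real L - real (Suc k)))
      = real (L choose k) * stat_factor L p k * (real L - real k)
          * ((1 - p) * (real L - real k) + p * real k)"
    using factor binomial unfolding up down
    by (metis (no_types, lifting) mult.assoc mult.commute)
qed

theorem mainTheorem16:
  fixes L :: nat and p :: real
  assumes "L \<ge> 2" and "0 \<le> p" and "p < 1"
  shows "(\<Sum>\<eta>0\<in>Omega L. \<Sum>\<eta>1\<in>Omega L.
            statdist L p \<eta>0 * Qtr L p \<eta>0 \<eta>1 * real (\<eta>0 0) * real (\<eta>1 0)) - 1/4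
         = (2 * p - 1) / (4 * (2 * real L * (1 - p) + 2 * p - 1))"
proof -
  define a where "a = (\<lambda>k. real (L choose k) * stat_factor L p k)"
  have balanced: "balanced L p a"
    unfolding a_def using assms by (intro balanced_stat_weights) auto
  have mass_pos: "(\<Sum>k\<le>L. a k) > 0"
    using Zc_pos[of p L] assms by (simp add: a_def Zc_eq_sum_weights)
  have "(\<Sum>\<eta>0\<in>Omega L. \<Sum>\<eta>1\<in>Omega L.
            statdist L p \<eta>0 * Qtr L p \<eta>0 \<eta>1 * real (\<eta>0 0) * real (\<eta>1 0))
      = (\<Sum>\<eta>\<in>Omega L. statdist L p \<eta> * real (\<eta> 0) * real (\<eta> 1))"
    by (rule two_step_correlation_eq_first_two_sites[OF assms(1)])
  also have "\<dots> = (\<Sum>\<eta>\<in>Omega L. stat_factor L p (weight L \<eta>) * real (\<eta> 0) * real (\<eta> 1)) / Zc L p"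
    by (simp add: statdist_def unnorm_eq_stat_factor sum_divide_distrib)
  also have "\<dots> = (\<Sum>k\<le>L. a k * (real k * (real k - 1))) / (real L * (real L - 1)) / (\<Sum>k\<le>L. a k)"
  proof -
    have "real L * (real L - 1) \<noteq> 0"
      using assms(1) by simp
    with sum_Omega_weight_first_two[OF assms(1), of "stat_factor L p"]
    have "(\<Sum>\<eta>\<in>Omega L. stat_factor L p (weight L \<eta>) * real (\<eta> 0) * real (\<eta> 1))
        = (\<Sum>k\<le>L. a k * (real k * (real k - 1))) / (real L * (real L - 1))"
      by (simp add: a_def field_simps)
    then show ?thesis by (simp add: a_def Zc_eq_sum_weights)
  qed
  finally show ?thesis
    using balanced_factorial_moment[OF balanced assms(1,3) mass_pos] by simp
qed

end
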